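(* Let $\Gamma$ be an ordered abelian group. The map $\Delta\mapsto\mathcal{O}_\Delta:=\{\infty\}\cup\{\gamma\in\Gamma:\gamma\in\Delta\text{ or }\gamma>\delta\text{ for all }\delta\in\Delta\}$ is a bijection between the convex subgroups of $\Gamma$ and the valuation hyperrings in the hyperfield $\mathcal{T}(\Gamma)$.
   Context: A hyperfield is $(F,+,\cdot,0,1)$ with $+$ a multivalued operation making $(F,+,0)$ a canonical hypergroup (associative, commutative, unique inverses $-x$ with $0\in x+(-x)$, and $z\in x+y\Rightarrow y\in z+(-x)$), $(F,\cdot)$ commutative with $0$ absorbing, $x(y+z)=xy+xz$ ($xA:=\{xa:a\in A\}$), and $F\setminus\{0\}$ an abelian group with neutral $1\neq0$. A hyperring is defined the same way without the unit/group requirement. For an ordered abelian group $(\Gamma,+,<,0)$ and $\infty>\Gamma$ with $\gamma+\infty=\infty+\gamma=\infty$, $\mathcal{T}(\Gamma)$ is the hyperfield on $\Gamma\cup\{\infty\}$ with multiplication $+$, zero $\infty$, unit $0$, and hyperaddition $x\boxplus\infty=\infty\boxplus x=\{x\}$, $x\boxplus y=\{\min\{x,y\}\}$ for $x\neq y$, $x\boxplus x=\{z:x\le z\le\infty\}$. A relational subhyperring of a hyperfield $F$ is a multiplicatively closed $S\subseteq F$ such that $(S,+_S,\cdot,0)$ is a hyperring with $x+_Sy:=(x+y)\cap S$. A valuation hyperring in $F$ is a relational subhyperring $\mathcal{O}$ such that for every non-zero $x\in F$, $x\in\mathcal{O}$ or $x^{-1}\in\mathcal{O}$. A subgroup $\Delta\le\Gamma$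 is convex if $\delta_1<\gamma<\delta_2$ with $\delta_i\in\Delta$ implies $\gamma\in\Delta$. *)

theory Defs
  imports Main
begin

definition hyperring :: "'a set \<Rightarrow> ('a \<Rightarrow> 'a \<Rightarrow> 'a set) \<Rightarrow> ('a \<Rightarrow> 'a \<Rightarrow> 'a) \<Rightarrow> 'a \<Rightarrow> bool" where
  "hyperring S add mul z \<longleftrightarrow>
     z \<in> S
   \<and> (\<forall>x\<in>S. \<forall>y\<in>S. add x y \<subseteq> S \<and> add x y \<noteq> {})
   \<and> (\<forall>x\<in>S. \<forall>y\<in>S. mul x y \<in> S)
   \<and> (\<forall>x\<in>S. \<forall>y\<in>S. \<forall>w\<in>S. (\<Union>a\<in>add x y. add a w) = (\<Union>b\<in>add y w. add x b))
   \<and> (\<forall>x\<in>S. \<forall>y\<in>S. add x y = add y x)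
   \<and> (\<forall>x\<in>S. add x z = {x})
   \<and> (\<forall>x\<in>S. \<exists>!x'. x' \<in> S \<and> z \<in> add x x')
   \<and> (\<forall>x\<in>S. \<forall>x'\<in>S. \<forall>y\<in>S. \<forall>w\<in>S. z \<in> add x x' \<longrightarrow> w \<in> add x y \<longrightarrow> y \<in> add w x')
   \<and> (\<forall>x\<in>S. \<forall>y\<in>S. mul x y = mul y x)
   \<and> (\<forall>x\<in>S. \<forall>y\<in>S. \<forall>w\<in>S. mul (mul x y) w = mul x (mul y w))
   \<and> (\<forall>x\<in>S. mul z x = z)
   \<and> (\<forall>x\<in>S. \<forall>y\<in>S. \<forall>w\<in>S. mul x ` add y w = add (mul x y) (mul x w))"

definition relational_subhyperring ::
  "('a \<Rightarrow> 'a \<Rightarrow> 'a set) \<Rightarrow> ('a \<Rightarrow> 'a \<Rightarrow> 'a) \<Rightarrow> 'a \<Rightarrow> 'a set \<Rightarrow> bool" where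
  "relational_subhyperring add mul z S \<longleftrightarrow>
     (\<forall>x\<in>S. \<forall>y\<in>S. mul x y \<in> S) \<and> hyperring S (\<lambda>x y. add x y \<inter> S) mul z"

definition valuation_hyperring ::
  "('a \<Rightarrow> 'a \<Rightarrow> 'a set) \<Rightarrow> ('a \<Rightarrow> 'a \<Rightarrow> 'a) \<Rightarrow> 'a \<Rightarrow> 'a \<Rightarrow> 'a set \<Rightarrow> bool" where
  "valuation_hyperring add mul z u R \<longleftrightarrow>
     relational_subhyperring add mul z R \<and>
     (\<forall>x. x \<noteq> z \<longrightarrow> x \<in> R \<or> (\<exists>y. mul x y = u \<and> y \<in> R))"

text \<open>Elements of T(\<Gamma>) are \<Gamma> \<union> {\<infinity>}, modelled as 'g option with None = \<infinity>.\<close>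

definition T_le :: "'g::linordered_ab_group_add option \<Rightarrow> 'g option \<Rightarrow> bool" where
  "T_le x y \<longleftrightarrow> (case (x, y) of
      (_, None) \<Rightarrow> True
    | (None, Some _) \<Rightarrow> False
    | (Some a, Some b) \<Rightarrow> a \<le> b)"

definition T_mul :: "'g::linordered_ab_group_add option \<Rightarrow> 'g option \<Rightarrow> 'g option" where
  "T_mul x y = (case (x, y) of (Some a, Some b) \<Rightarrow> Some (a + b) | _ \<Rightarrow> None)"

definition T_add :: "'g::linordered_ab_group_add option \<Rightarrow> 'g option \<Rightarrow> 'g option set" where
  "T_add x y = (if y = None then {x}
                else if x = None then {y}
                else if x \<noteq> y then {if T_le x y then x else y}
                else {w. T_le x w})"

abbreviation T_zero :: "'g::linordered_ab_group_add option" where "T_zero \<equiv> None"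
abbreviation T_one :: "'g::linordered_ab_group_add option" where "T_one \<equiv> Some 0"

definition add_subgroup :: "'g::ab_group_add set \<Rightarrow> bool" where
  "add_subgroup D \<longleftrightarrow> 0 \<in> D \<and> (\<forall>a\<in>D. \<forall>b\<in>D. a + b \<in> D) \<and> (\<forall>a\<in>D. - a \<in> D)"

definition convex_subgroup :: "'g::linordered_ab_group_add set \<Rightarrow> bool" where
  "convex_subgroup D \<longleftrightarrow> add_subgroup D \<and>
     (\<forall>d1\<in>D. \<forall>d2\<in>D. \<forall>g. d1 < g \<and> g < d2 \<longrightarrow> g \<in> D)"

definition O_of :: "'g::linordered_ab_group_add set \<Rightarrow> 'g option set" where
  "O_of D = insert None (Some ` {g. g \<in> D \<or> (\<forall>d\<in>D. g > d)})"

end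

theory Submission
  imports Defs
begin

text \<open>
  Hyperaddition in \<open>\<T>(\<Gamma>)\<close> never leaves a set that contains \<open>\<infinity>\<close> and is upward closed, so such a
  set is a relational subhyperring once it is closed under multiplication. Conversely, in a
  valuation hyperring \<open>R\<close> with \<open>a \<in> R\<close>, \<open>a \<le> b\<close> and \<open>b \<notin> R\<close>, we have \<open>-b \<in> R\<close>, and distributivity of
  the restricted sum gives \<open>0 \<in> ((a-b) \<boxplus> (a-b)) \<inter> R = (-b)\<cdot>((a \<boxplus> a) \<inter> R)\<close>, which puts \<open>b\<close> into \<open>R\<close>.
  Hence the valuation hyperrings are exactly the sets \<open>{\<infinity>} \<union> P\<close> with \<open>P \<subseteq> \<Gamma>\<close> an upward closed
  submonoid satisfying \<open>\<Gamma> = P \<union> -P\<close>. These \<open>P\<close> correspond to the convex subgroups via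
  \<open>P \<mapsto> P \<inter> -P\<close> and \<open>\<Delta> \<mapsto> {\<gamma>. \<exists>\<delta>\<in>\<Delta>. \<delta> \<le> \<gamma>}\<close>, and the latter set is the finite part of \<open>\<O>\<^sub>\<Delta>\<close>.
\<close>

lemma T_mul_simps [simp]:
  "T_mul None y = None" "T_mul x None = None" "T_mul (Some a) (Some b) = Some (a + b)"
  by (cases y, cases x) (auto simp: T_mul_def split: option.splits)

lemma T_mul_eq_one_iff: "T_mul (Some a) y = Some 0 \<longleftrightarrow> y = Some (- a)"
  by (cases y) (auto simp: add_eq_0_iff)

lemma T_add_None [simp]: "T_add x None = {x}" "T_add None x = {x}"
  by (auto simp: T_add_def)

lemma T_add_Some_Some:
  "T_add (Some a) (Some b) = (if a = b then insert None (Some ` {a..}) else {Some (min a b)})"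
  by (auto simp: T_add_def T_le_def min_def split: option.splits)

lemma T_add_commute: "T_add x y = T_add y x"
  by (cases x; cases y) (auto simp: T_add_Some_Some min.commute)

lemma T_add_nonempty: "T_add x y \<noteq> {}"
  by (cases x; cases y) (auto simp: T_add_Some_Some)

lemma None_mem_T_add_iff: "None \<in> T_add x y \<longleftrightarrow> y = x"
  by (cases x; cases y) (auto simp: T_add_Some_Some)

lemma T_add_reversible: "w \<in> T_add x y \<Longrightarrow> y \<in> T_add w x"
  by (cases x; cases y; cases w) (auto simp: T_add_Some_Some min_def split: if_splits)

lemma T_mul_commute: "T_mul x y = T_mul y x"
  by (cases x; cases y) (auto simp: add.commute)

lemma T_mul_assoc: "T_mul (T_mul x y) w = T_mul x (T_mul y w)"
  by (cases x; cases y; cases w) (auto simp: add.assoc)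

lemma T_mul_T_add_distrib: "T_mul x ` T_add y w = T_add (T_mul x y) (T_mul x w)"
proof (cases x)
  case None
  then show ?thesis using T_add_nonempty[of y w] by auto
next
  case (Some a)
  have translate: "(\<lambda>c. Some (a + c)) ` {b..} = Some ` {a + b..}" for b
  proof (intro equalityI subsetI)
    fix v assume "v \<in> Some ` {a + b..}"
    then obtain c where "v = Some c" "a + b \<le> c" by blast
    then show "v \<in> (\<lambda>c. Some (a + c)) ` {b..}"
      by (intro image_eqI[where x = "c - a"]) (auto simp: le_diff_eq add.commute)
  qed auto
  show ?thesis using Some
    by (cases y; cases w) (auto simp: T_add_Some_Some min_add_distrib_right image_image translate)
qed

text \<open>\<open>(a \<boxplus> b) \<boxplus> c\<close> for finite \<open>a, b, c\<close>: the minimum \<open>m\<close> if it is attained once, all of \<open>[m, \<infinity>]\<close>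
  otherwise. The description is symmetric, which is what makes associativity go through.\<close>

definition T_add3 :: "'g::linordered_ab_group_add \<Rightarrow> 'g \<Rightarrow> 'g \<Rightarrow> 'g option set" where
  "T_add3 a b c =
     (let m = min a (min b c) in
      if (a = b \<and> a \<le> c) \<or> (b = c \<and> b \<le> a) \<or> (c = a \<and> c \<le> b)
      then insert None (Some ` {m..}) else {Some m})"

lemma T_add3_rotate: "T_add3 b c a = T_add3 a b c"
proof -
  have "min b (min c a) = min a (min b c)"
    by (simp add: min.commute min.left_commute)
  moreover have "(b = c \<and> b \<le> a \<or> c = a \<and> c \<le> b \<or> a = b \<and> a \<le> c) \<longleftrightarrow>
      (a = b \<and> a \<le> c \<or> b = c \<and> b \<le> a \<or> c = a \<and> c \<le> b)"
    by blast
  ultimately show ?thesis unfolding T_add3_def Let_def by presburger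
qed

lemma T_add_Some_Some_Some:
  "(\<Union>e\<in>T_add (Some a) (Some b). T_add e (Some c)) = T_add3 a b c"
proof (cases "a = b")
  case True
  show "?thesis"
  proof (cases "a \<le> c")
    case True
    have "{Some c} \<union> (\<Union>d\<in>{a..}. T_add (Some d) (Some c)) = insert None (Some ` {a..})"
    proof (intro equalityI subsetI)
      fix v assume "v \<in> insert None (Some ` {a..})"
      then show "v \<in> {Some c} \<union> (\<Union>d\<in>{a..}. T_add (Some d) (Some c))"
        using True by (auto simp: T_add_Some_Some not_le min_def intro!: bexI[where x = "the v"])
    qed (use True in \<open>auto simp: T_add_Some_Some min_def\<close>)
    then show ?thesis using True \<open>a = b\<close> by (simp add: T_add_Some_Some T_add3_def min_def)
  next
    case False
    then show ?thesis using \<open>a = b\<close> by (auto simp: T_add_Some_Some T_add3_def min_def)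
  qed
next
  case False
  then show ?thesis by (auto simp: T_add_Some_Some T_add3_def min_def)
qed

lemma T_add_assoc: "(\<Union>e\<in>T_add x y. T_add e w) = (\<Union>e\<in>T_add y w. T_add x e)"
proof (cases x; cases y; cases w)
  fix a b c assume [simp]: "x = Some a" "y = Some b" "w = Some c"
  have "(\<Union>e\<in>T_add y w. T_add x e) = (\<Union>e\<in>T_add (Some b) (Some c). T_add e (Some a))"
    by (simp add: T_add_commute)
  then show ?thesis by (simp add: T_add_Some_Some_Some T_add3_rotate)
qed auto

lemma hyperring_T: "hyperring UNIV T_add T_mul None"
  unfolding hyperring_def None_mem_T_add_iff
  by (simp add: T_add_nonempty T_add_assoc T_add_reversible T_mul_assoc T_mul_T_add_distrib)
    (metis T_add_commute T_mul_commute)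

lemma relational_subhyperringI:
  assumes H: "hyperring UNIV add mul z"
    and z: "z \<in> S"
    and add_closed: "\<And>x y. x \<in> S \<Longrightarrow> y \<in> S \<Longrightarrow> add x y \<subseteq> S"
    and mul_closed: "\<And>x y. x \<in> S \<Longrightarrow> y \<in> S \<Longrightarrow> mul x y \<in> S"
    and neg_closed: "\<And>x. x \<in> S \<Longrightarrow> \<exists>x'\<in>S. z \<in> add x x'"
  shows "relational_subhyperring add mul z S"
proof -
  have nonempty: "\<And>x y. add x y \<noteq> {}"
    and assoc: "\<And>x y w. (\<Union>a\<in>add x y. add a w) = (\<Union>b\<in>add y w. add x b)"
    and comm: "\<And>x y. add x y = add y x"
    and zero: "\<And>x. add x z = {x}"
    and neg_unique: "\<And>x. \<exists>!x'. x' \<in> UNIV \<and> z \<in> add x x'"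
    and reversible: "\<And>x x' y w. z \<in> add x x' \<Longrightarrow> w \<in> add x y \<Longrightarrow> y \<in> add w x'"
    and mul_comm: "\<And>x y. mul x y = mul y x"
    and mul_assoc: "\<And>x y w. mul (mul x y) w = mul x (mul y w)"
    and mul_zero: "\<And>x. mul z x = z"
    and distrib: "\<And>x y w. mul x ` add y w = add (mul x y) (mul x w)"
    using H unfolding hyperring_def ball_UNIV by metis+
  have restrict: "add x y \<inter> S = add x y" if "x \<in> S" "y \<in> S" for x y
    using add_closed[OF that] by blast
  have mem: "a \<in> S" if "a \<in> add x y" "x \<in> S" "y \<in> S" for a x y
    using add_closed that by blast
  have restricted_assoc:
    "(\<Union>a\<in>add x y \<inter> S. add a w \<inter> S) = (\<Union>b\<in>add y w \<inter> S. add x b \<inter> S)"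
    if "x \<in> S" "y \<in> S" "w \<in> S" for x y w
    using that assoc by (simp add: restrict mem cong: SUP_cong_simp)
  have restricted_neg_unique: "\<exists>!x'. x' \<in> S \<and> z \<in> add x x'" if "x \<in> S" for x
    using neg_closed[OF that] neg_unique[of x] z by blast
  show ?thesis
    unfolding relational_subhyperring_def hyperring_def
  proof (intro conjI ballI impI)
    show "(\<Union>a\<in>add x y \<inter> S. add a w \<inter> S) = (\<Union>b\<in>add y w \<inter> S. add x b \<inter> S)"
      if "x \<in> S" "y \<in> S" "w \<in> S" for x y w
      using restricted_assoc that .
    show "y \<in> add w x' \<inter> S" if "y \<in> S" "z \<in> add x x' \<inter> S" "w \<in> add x y \<inter> S" for x x' y w
      using reversible that by blast
  qed (simp_all add: z mul_closed add_closed restrict nonempty zero restricted_neg_unique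
      mul_assoc mul_zero distrib, (rule comm mul_comm)+)
qed

lemma relational_subhyperringD:
  assumes "relational_subhyperring add mul z S"
  shows "z \<in> S" "x \<in> S \<Longrightarrow> y \<in> S \<Longrightarrow> mul x y \<in> S"
    and "x \<in> S \<Longrightarrow> y \<in> S \<Longrightarrow> w \<in> S \<Longrightarrow>
      mul x ` (add y w \<inter> S) = add (mul x y) (mul x w) \<inter> S"
  using assms unfolding relational_subhyperring_def hyperring_def by metis+

lemma relational_subhyperring_T:
  assumes "None \<in> S"
    and "\<And>x y. x \<in> S \<Longrightarrow> y \<in> S \<Longrightarrow> T_add x y \<subseteq> S"
    and "\<And>x y. x \<in> S \<Longrightarrow> y \<in> S \<Longrightarrow> T_mul x y \<in> S"
  shows "relational_subhyperring T_add T_mul None S"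
  by (rule relational_subhyperringI[OF hyperring_T assms]) (auto simp: None_mem_T_add_iff)

definition up_closure :: "'a::order set \<Rightarrow> 'a set" where
  "up_closure D = {g. \<exists>d\<in>D. d \<le> g}"

definition valuation_monoid :: "'g::linordered_ab_group_add set \<Rightarrow> bool" where
  "valuation_monoid P \<longleftrightarrow>
     (\<forall>a\<in>P. \<forall>b\<in>P. a + b \<in> P) \<and> (\<forall>a\<in>P. \<forall>b. a \<le> b \<longrightarrow> b \<in> P) \<and> (\<forall>g. g \<in> P \<or> - g \<in> P)"

lemma convex_subgroupD:
  assumes "convex_subgroup D"
  shows "0 \<in> D" "a \<in> D \<Longrightarrow> - a \<in> D"
    and "d1 \<in> D \<Longrightarrow> d2 \<in> D \<Longrightarrow> d1 \<le> g \<Longrightarrow> g \<le> d2 \<Longrightarrow> g \<in> D"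
  using assms unfolding convex_subgroup_def add_subgroup_def
  by (blast, blast, metis order.order_iff_strict)

lemma O_of_eq_up_closure:
  assumes "convex_subgroup D"
  shows "O_of D = insert None (Some ` up_closure D)"
proof -
  note D = convex_subgroupD[OF assms]
  have "{g. g \<in> D \<or> (\<forall>d\<in>D. d < g)} = up_closure D"
  proof (intro equalityI subsetI)
    fix g assume "g \<in> {g. g \<in> D \<or> (\<forall>d\<in>D. d < g)}"
    then show "g \<in> up_closure D"
      using D(1) unfolding up_closure_def by (auto intro: less_imp_le)
  next
    fix g assume "g \<in> up_closure D"
    then obtain d where "d \<in> D" "d \<le> g" unfolding up_closure_def by blast
    have "d' < g" if "g \<notin> D" "d' \<in> D" for d'
      using D(3)[OF \<open>d \<in> D\<close> \<open>d' \<in> D\<close> \<open>d \<le> g\<close>] that by (meson not_le)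
    then show "g \<in> {g. g \<in> D \<or> (\<forall>d\<in>D. d < g)}"
      by blast
  qed
  then show ?thesis unfolding O_of_def by simp
qed

lemma valuation_monoid_up_closure:
  assumes "add_subgroup D"
  shows "valuation_monoid (up_closure D)"
proof -
  have "0 \<in> D" and add: "\<And>a b. a \<in> D \<Longrightarrow> b \<in> D \<Longrightarrow> a + b \<in> D"
    using assms unfolding add_subgroup_def by auto
  have "a + b \<in> up_closure D" if "a \<in> up_closure D" "b \<in> up_closure D" for a b
  proof -
    obtain d1 d2 where "d1 \<in> D" "d1 \<le> a" "d2 \<in> D" "d2 \<le> b"
      using \<open>a \<in> up_closure D\<close> \<open>b \<in> up_closure D\<close> unfolding up_closure_def by blast
    then have "d1 + d2 \<in> D" "d1 + d2 \<le> a + b"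
      by (simp_all add: add add_mono)
    then show ?thesis unfolding up_closure_def by blast
  qed
  moreover have "g \<in> up_closure D \<or> - g \<in> up_closure D" for g
  proof (cases "0 \<le> g")
    case False
    then have "0 \<le> - g" by simp
    with \<open>0 \<in> D\<close> show ?thesis unfolding up_closure_def by blast
  qed (use \<open>0 \<in> D\<close> in \<open>auto simp: up_closure_def\<close>)
  moreover have "b \<in> up_closure D" if "a \<in> up_closure D" "a \<le> b" for a b
    using that order.trans unfolding up_closure_def by blast
  ultimately show ?thesis
    unfolding valuation_monoid_def by blast
qed

lemma valuation_monoidD:
  assumes "valuation_monoid P"
  shows "a \<in> P \<Longrightarrow> b \<in> P \<Longrightarrow> a + b \<in> P" "a \<in> P \<Longrightarrow> a \<le> b \<Longrightarrow> b \<in> P"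
    and "0 \<in> P"
  using assms unfolding valuation_monoid_def by (blast, blast, metis minus_zero)

lemma units_up_closure:
  assumes "convex_subgroup D"
  shows "{g. g \<in> up_closure D \<and> - g \<in> up_closure D} = D"
proof (intro equalityI subsetI)
  fix g assume "g \<in> {g. g \<in> up_closure D \<and> - g \<in> up_closure D}"
  then obtain d1 d2 where "d1 \<in> D" "d1 \<le> g" "d2 \<in> D" "d2 \<le> - g"
    unfolding up_closure_def by blast
  moreover from \<open>d2 \<le> - g\<close> have "g \<le> - d2"
    by (simp add: le_minus_iff)
  ultimately show "g \<in> D"
    using convex_subgroupD(2,3)[OF assms] by blast
next
  fix g assume "g \<in> D"
  then have "g \<in> up_closure D" "- g \<in> up_closure D"
    using convex_subgroupD(2)[OF assms] unfolding up_closure_def by blast+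
  then show "g \<in> {g. g \<in> up_closure D \<and> - g \<in> up_closure D}" by blast
qed

lemma convex_subgroup_units:
  assumes "valuation_monoid P"
  shows "convex_subgroup {g. g \<in> P \<and> - g \<in> P}"
  unfolding convex_subgroup_def add_subgroup_def
proof (intro conjI ballI allI impI)
  note P = valuation_monoidD[OF assms]
  show "0 \<in> {g. g \<in> P \<and> - g \<in> P}" using P(3) by simp
  fix a b assume "a \<in> {g. g \<in> P \<and> - g \<in> P}" "b \<in> {g. g \<in> P \<and> - g \<in> P}"
  then have "a + b \<in> P" "- a + - b \<in> P" using P(1) by blast+
  then show "a + b \<in> {g. g \<in> P \<and> - g \<in> P}" by (simp only: mem_Collect_eq minus_add_distrib)
next
  fix a assume "a \<in> {g. g \<in> P \<and> - g \<in> P}"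
  then show "- a \<in> {g. g \<in> P \<and> - g \<in> P}" by simp
next
  note P = valuation_monoidD[OF assms]
  fix d1 d2 g
  assume "d1 \<in> {g. g \<in> P \<and> - g \<in> P}" "d2 \<in> {g. g \<in> P \<and> - g \<in> P}" "d1 < g \<and> g < d2"
  then have "d1 \<in> P" "d1 \<le> g" "- d2 \<in> P" "- d2 \<le> - g" by auto
  then show "g \<in> {g. g \<in> P \<and> - g \<in> P}" using P(2) by blast
qed

lemma up_closure_units:
  assumes "valuation_monoid P"
  shows "up_closure {g. g \<in> P \<and> - g \<in> P} = P"
proof (intro equalityI subsetI)
  note P = valuation_monoidD[OF assms]
  fix g assume "g \<in> P"
  show "g \<in> up_closure {g. g \<in> P \<and> - g \<in> P}"
  proof (cases "- g \<in> P")
    case True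
    with \<open>g \<in> P\<close> show ?thesis unfolding up_closure_def by blast
  next
    case False
    have "0 \<le> g"
    proof (rule ccontr)
      assume "\<not> 0 \<le> g"
      then have "0 \<le> - g" by simp
      with P(2,3) False show False by blast
    qed
    with P(3) show ?thesis unfolding up_closure_def by force
  qed
next
  fix g assume "g \<in> up_closure {g. g \<in> P \<and> - g \<in> P}"
  then show "g \<in> P"
    using valuation_monoidD(2)[OF assms] unfolding up_closure_def by blast
qed

lemma bij_betw_up_closure:
  "bij_betw up_closure {D :: 'g::linordered_ab_group_add set. convex_subgroup D}
     {P. valuation_monoid P}"
proof (rule bij_betw_byWitness[where f' = "\<lambda>P. {g. g \<in> P \<and> - g \<in> P}"])
  show "up_closure ` {D. convex_subgroup D} \<subseteq> {P. valuation_monoid P}"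
    by (auto simp: convex_subgroup_def intro: valuation_monoid_up_closure)
qed (simp_all add: units_up_closure up_closure_units convex_subgroup_units image_subset_iff)

lemma valuation_hyperring_T_total:
  assumes "valuation_hyperring T_add T_mul None (Some 0) R"
  shows "Some g \<in> R \<or> Some (- g) \<in> R"
  using assms unfolding valuation_hyperring_def by (auto simp: T_mul_eq_one_iff)

lemma valuation_hyperring_T_upward_closed:
  assumes V: "valuation_hyperring T_add T_mul None (Some 0) R"
    and "Some a \<in> R" "a \<le> b"
  shows "Some b \<in> R"
proof (rule ccontr)
  assume "Some b \<notin> R"
  then have "Some (- b) \<in> R"
    using valuation_hyperring_T_total[OF V] by blast
  have "Some 0 \<in> R"
    using valuation_hyperring_T_total[OF V, of 0] by simp
  have S: "relational_subhyperring T_add T_mul None R"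
    using V unfolding valuation_hyperring_def by blast
  note distrib = relational_subhyperringD(3)[OF S]
  have "Some 0 \<in> T_add (Some (- b + a)) (Some (- b + a)) \<inter> R"
    using \<open>a \<le> b\<close> \<open>Some 0 \<in> R\<close> by (simp add: T_add_Some_Some)
  also have "\<dots> = T_mul (Some (- b)) ` (T_add (Some a) (Some a) \<inter> R)"
    using distrib[OF \<open>Some (- b) \<in> R\<close> \<open>Some a \<in> R\<close> \<open>Some a \<in> R\<close>] by simp
  finally obtain e where "e \<in> R" "T_mul (Some (- b)) e = Some 0"
    by auto
  then have "Some b \<in> R"
    by (simp add: T_mul_eq_one_iff)
  with \<open>Some b \<notin> R\<close> show False ..
qed

lemma valuation_hyperring_T_iff:
  "valuation_hyperring T_add T_mul None (Some 0) R \<longleftrightarrow>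
     None \<in> R \<and> valuation_monoid {g. Some g \<in> R}"
proof
  assume V: "valuation_hyperring T_add T_mul None (Some 0) R"
  then have S: "relational_subhyperring T_add T_mul None R"
    unfolding valuation_hyperring_def by blast
  have "Some (a + b) \<in> R" if "Some a \<in> R" "Some b \<in> R" for a b
    using relational_subhyperringD(2)[OF S that] by simp
  then show "None \<in> R \<and> valuation_monoid {g. Some g \<in> R}"
    using relational_subhyperringD(1)[OF S]
      valuation_hyperring_T_upward_closed[OF V] valuation_hyperring_T_total[OF V]
    unfolding valuation_monoid_def by blast
next
  assume "None \<in> R \<and> valuation_monoid {g. Some g \<in> R}"
  then have "None \<in> R" and add: "\<And>a b. Some a \<in> R \<Longrightarrow> Some b \<in> R \<Longrightarrow> Some (a + b) \<in> R"
    and up: "\<And>a b. Some a \<in> R \<Longrightarrow> a \<le> b \<Longrightarrow> Some b \<in> R"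
    and total: "\<And>g. Some g \<in> R \<or> Some (- g) \<in> R"
    unfolding valuation_monoid_def by auto
  have "T_add x y \<subseteq> R" if "x \<in> R" "y \<in> R" for x y
    using that \<open>None \<in> R\<close> up
    by (cases x; cases y) (auto simp: T_add_Some_Some min_def)
  moreover have "T_mul x y \<in> R" if "x \<in> R" "y \<in> R" for x y
    using that \<open>None \<in> R\<close> add by (cases x; cases y) auto
  moreover have "x \<in> R \<or> (\<exists>y. T_mul x y = Some 0 \<and> y \<in> R)" if "x \<noteq> None" for x
    using that total by (cases x) (auto simp: T_mul_eq_one_iff)
  ultimately show "valuation_hyperring T_add T_mul None (Some 0) R"
    unfolding valuation_hyperring_def using relational_subhyperring_T[OF \<open>None \<in> R\<close>] by blast
qed

lemma bij_betw_insert_None_image_Some: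
  "bij_betw (\<lambda>P. insert None (Some ` P)) {P :: 'g::linordered_ab_group_add set. valuation_monoid P}
     {R. valuation_hyperring T_add T_mul None (Some 0) R}"
proof (rule bij_betw_byWitness[where f' = "\<lambda>R. {g. Some g \<in> R}"])
  have "insert None (Some ` {g. Some g \<in> R}) = R" if "None \<in> R" for R :: "'g option set"
  proof (intro equalityI subsetI)
    fix x assume "x \<in> R"
    then show "x \<in> insert None (Some ` {g. Some g \<in> R})" by (cases x) auto
  qed (use that in auto)
  then show "\<forall>R\<in>{R. valuation_hyperring T_add T_mul None (Some 0) R}.
      insert None (Some ` {g. Some g \<in> R}) = R"
    by (auto simp: valuation_hyperring_T_iff)
qed (auto simp: valuation_hyperring_T_iff image_iff)

theorem mainTheorem16:
  fixes \<Gamma>_witness :: "'g::linordered_ab_group_add itself"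
  shows "bij_betw (O_of :: 'g set \<Rightarrow> 'g option set)
           {D. convex_subgroup D}
           {R. valuation_hyperring T_add T_mul T_zero T_one R}"
proof -
  have "bij_betw ((\<lambda>P. insert None (Some ` P)) \<circ> up_closure) {D :: 'g set. convex_subgroup D}
      {R. valuation_hyperring T_add T_mul T_zero T_one R}"
    using bij_betw_up_closure bij_betw_insert_None_image_Some by (rule bij_betw_trans)
  then show ?thesis
    by (rule bij_betw_cong[THEN iffD1, rotated]) (simp add: O_of_eq_up_closure)
qed

end
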